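(* Let $L\ge 2$, let $\Omega\subsetneq\mathbb{Z}_L$ with $|\Omega|=n$, and let $K\ge 2$. Let $\mathfrak{C}=\{\mathcal{C}^0,\dots,\mathcal{C}^{K-1}\}$, where each $\mathcal{C}^i=\{C^i_0,\dots,C^i_{M-1}\}$ is a set of $M$ complex sequences of length $L$, every sequence $C^i_j$ satisfying the spectral constraint: its frequency-domain dual $(\hat c^i_{j,0},\dots,\hat c^i_{j,L-1})$ satisfies $|\hat c^i_{j,k}|^2=\frac{L}{L-n}$ for $k\notin\Omega$ and $\hat c^i_{j,k}=0$ for $k\in\Omega$. Define $\theta_c(\mathfrak{C})=\max\{|\theta_{C^i_l,C^j_m}(\tau)|:0\le i\neq j<K,\ 0\le l,m<M,\ 0\le \tau<L\}$. Then $$\theta_c(\mathfrak{C})\ge\frac{L}{\sqrt{L-n}}.$$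
   Context: $\omega_L=e^{2\pi\sqrt{-1}/L}$. For a length-$L$ sequence $C=(c_0,\dots,c_{L-1})$ its frequency-domain dual is $\widehat C=(\hat c_0,\dots,\hat c_{L-1})$ with $\hat c_k=\frac{1}{\sqrt L}\sum_{t=0}^{L-1}c_t\omega_L^{-tk}$. The periodic cross-correlation of length-$L$ sequences $C,D$ is $\theta_{C,D}(\tau)=\sum_{t=0}^{L-1}c_t d^*_{\langle t+\tau\rangle_L}$, where $\langle\cdot\rangle_L$ is reduction mod $L$. *)

theory Defs
  imports Complex_Main
begin

text \<open>Sequences of length L are functions nat \<Rightarrow> complex, only indices t < L matter.\<close>

definition omega :: "nat \<Rightarrow> complex" where
  "omega L = exp (2 * of_real pi * \<i> / of_nat L)"

definition dual :: "nat \<Rightarrow> (nat \<Rightarrow> complex) \<Rightarrow> nat \<Rightarrow> complex" where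
  "dual L c k = (1 / of_real (sqrt (real L))) *
     (\<Sum>t<L. c t * inverse (omega L) ^ (t * k))"

definition pcorr :: "nat \<Rightarrow> (nat \<Rightarrow> complex) \<Rightarrow> (nat \<Rightarrow> complex) \<Rightarrow> nat \<Rightarrow> complex" where
  "pcorr L c d \<tau> = (\<Sum>t<L. c t * cnj (d ((t + \<tau>) mod L)))"

definition spectral_constraint :: "nat \<Rightarrow> nat set \<Rightarrow> (nat \<Rightarrow> complex) \<Rightarrow> bool" where
  "spectral_constraint L \<Omega> c \<longleftrightarrow>
     (\<forall>k<L. (k \<notin> \<Omega> \<longrightarrow> (cmod (dual L c k))\<^sup>2 = real L / (real L - real (card \<Omega>)))
           \<and> (k \<in> \<Omega> \<longrightarrow> dual L c k = 0))"

text \<open>Maximum cross-correlation magnitude between sequences of distinct sets.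
  C i l is the l-th sequence of the i-th set.\<close>
definition theta_c :: "nat \<Rightarrow> nat \<Rightarrow> nat \<Rightarrow> (nat \<Rightarrow> nat \<Rightarrow> nat \<Rightarrow> complex) \<Rightarrow> real" where
  "theta_c L K M C = Max {cmod (pcorr L (C i l) (C j m) \<tau>) | i j l m \<tau>.
       i < K \<and> j < K \<and> i \<noteq> j \<and> l < M \<and> m < M \<and> \<tau> < L}"

end

theory Submission
  imports Defs "HOL-Analysis.Complex_Transcendental"
begin

(* By orthogonality of the L-th roots of unity, the periodic cross-correlation of C and D is
   sqrt L times the DFT of the product spectrum hat c_k * cnj (hat d_k), and Parseval holds.
   Hence the correlation energy sum_tau |theta(tau)|^2 is L * sum_k |hat c_k|^2 |hat d_k|^2,
   which the spectral constraint fixes to L * (L - n) * (L / (L - n))^2 = L^3 / (L - n).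
   Some shift tau therefore has |theta(tau)|^2 >= L^2 / (L - n); any two sequences taken
   from different sets already witness the bound. *)

lemma omega_power: "omega L ^ e = exp (2 * of_real pi * \<i> * of_nat e / of_nat L)"
  unfolding omega_def by (simp add: exp_of_nat_mult[symmetric] mult.commute mult.left_commute)

lemma omega_nonzero: "omega L \<noteq> 0"
  unfolding omega_def by simp

lemma cnj_omega: "cnj (omega L) = inverse (omega L)"
  unfolding omega_def by (simp add: exp_cnj complex_cnj_divide exp_minus[symmetric])

lemma omega_power_eq_1_iff:
  assumes "L > 0"
  shows "omega L ^ e = 1 \<longleftrightarrow> L dvd e"
proof
  assume "omega L ^ e = 1"
  then obtain m :: int where "2 * pi * real e / real L = of_int (2 * m) * pi"
    unfolding omega_power exp_eq_1 by (auto simp: field_simps)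
  then have "real e = real L * of_int m"
    using assms by (auto simp: field_simps)
  then have "int e = int L * m"
    by (metis of_int_eq_iff of_int_mult of_int_of_nat_eq)
  then show "L dvd e"
    by (metis dvd_triv_left int_dvd_int_iff)
next
  assume "L dvd e"
  then obtain m where "e = L * m" by auto
  then have "2 * of_real pi * \<i> * of_nat e / of_nat L = of_nat m * (2 * of_real pi * \<i>)"
    using assms by (simp add: field_simps)
  then show "omega L ^ e = 1"
    unfolding omega_power by (simp add: exp_of_nat_mult)
qed

lemma omega_power_eq_iff:
  assumes "L > 0"
  shows "omega L ^ u = omega L ^ t \<longleftrightarrow> u mod L = t mod L"
proof -
  have *: "omega L ^ u = omega L ^ t \<longleftrightarrow> u mod L = t mod L" if "t \<le> u" for t u
  proof -
    have "omega L ^ u = omega L ^ t * omega L ^ (u - t)"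
      using that by (simp add: power_add[symmetric])
    then have "omega L ^ u = omega L ^ t \<longleftrightarrow> omega L ^ (u - t) = 1"
      using omega_nonzero by (metis mult_cancel_left1 power_not_zero)
    also have "\<dots> \<longleftrightarrow> u mod L = t mod L"
      using that by (simp add: omega_power_eq_1_iff[OF assms] mod_eq_dvd_iff_nat)
    finally show ?thesis .
  qed
  show ?thesis
    using *[of t u] *[of u t] by (cases "t \<le> u") auto
qed

lemma sum_omega_orthogonality:
  assumes "L > 0"
  shows "(\<Sum>k<L. omega L ^ (u * k) * inverse (omega L) ^ (t * k))
           = (if u mod L = t mod L then of_nat L else 0)"
proof -
  define z where "z = omega L ^ u / omega L ^ t"
  have sum_eq: "(\<Sum>k<L. omega L ^ (u * k) * inverse (omega L) ^ (t * k)) = (\<Sum>k<L. z ^ k)"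
    unfolding z_def by (simp add: power_mult power_mult_distrib divide_inverse power_inverse)
  have z_eq_1: "z = 1 \<longleftrightarrow> u mod L = t mod L"
    unfolding z_def using omega_nonzero omega_power_eq_iff[OF assms] by simp
  have "omega L ^ L = 1"
    using omega_power_eq_1_iff[OF assms] by simp
  then have "z ^ L = 1"
    unfolding z_def by (simp add: power_divide power_mult[symmetric] mult.commute[of _ L] power_mult)
  then show ?thesis
    unfolding sum_eq using z_eq_1 geometric_sum[of z L] by auto
qed

lemma cnj_dual:
  "cnj (dual L d k) = 1 / of_real (sqrt (real L)) * (\<Sum>u<L. cnj (d u) * omega L ^ (u * k))"
proof -
  have "cnj (inverse (omega L)) = omega L"
    by (simp add: cnj_omega)
  then show ?thesis
    unfolding dual_def by (simp add: cnj_sum)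
qed

lemma dual_mult_cnj_dual:
  "dual L c k * cnj (dual L d k)
     = 1 / of_nat L * (\<Sum>t<L. \<Sum>u<L. c t * cnj (d u) * (omega L ^ (u * k) * inverse (omega L) ^ (t * k)))"
proof -
  let ?s = "1 / of_real (sqrt (real L)) :: complex"
  have "?s * ?s = 1 / of_nat L"
    by (simp flip: of_real_mult add: of_real_divide)
  moreover have "dual L c k * cnj (dual L d k)
      = (?s * ?s) * ((\<Sum>t<L. c t * inverse (omega L) ^ (t * k)) * (\<Sum>u<L. cnj (d u) * omega L ^ (u * k)))"
    unfolding cnj_dual unfolding dual_def by (simp only: mult_ac)
  ultimately show ?thesis
    unfolding sum_product by (simp add: mult_ac)
qed

lemma pcorr_eq_sum_dual:
  assumes "L > 0"
  shows "pcorr L c d \<tau> = (\<Sum>k<L. dual L c k * cnj (dual L d k) * inverse (omega L) ^ (\<tau> * k))"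
proof -
  let ?w = "omega L"
  have "(\<Sum>k<L. dual L c k * cnj (dual L d k) * inverse ?w ^ (\<tau> * k))
      = 1 / of_nat L * (\<Sum>k<L. \<Sum>t<L. \<Sum>u<L. c t * cnj (d u) *
           (?w ^ (u * k) * inverse ?w ^ ((t + \<tau>) * k)))"
    unfolding dual_mult_cnj_dual sum_distrib_left sum_distrib_right
    by (intro sum.cong refl) (simp add: algebra_simps power_add)
  also have "\<dots> = 1 / of_nat L * (\<Sum>t<L. \<Sum>u<L. c t * cnj (d u) *
           (\<Sum>k<L. ?w ^ (u * k) * inverse ?w ^ ((t + \<tau>) * k)))"
    unfolding sum_distrib_left by (subst sum.swap, subst (2) sum.swap) (rule refl)
  also have "\<dots> = 1 / of_nat L * (\<Sum>t<L. \<Sum>u<L. c t * cnj (d u) *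
           (if u = (t + \<tau>) mod L then of_nat L else 0))"
    unfolding sum_omega_orthogonality[OF assms] by (intro arg_cong2[where f = "(*)"] sum.cong) auto
  also have "\<dots> = pcorr L c d \<tau>"
    unfolding pcorr_def using assms
    by (simp add: if_distrib[of "\<lambda>x. _ * x"] sum.delta sum_distrib_left cong: if_cong)
  finally show ?thesis ..
qed

corollary sum_norm_dual_power2:
  assumes "L > 0"
  shows "(\<Sum>k<L. (cmod (dual L a k))\<^sup>2) = (\<Sum>t<L. (cmod (a t))\<^sup>2)"
proof -
  have "complex_of_real (\<Sum>k<L. (cmod (dual L a k))\<^sup>2) = pcorr L a a 0"
    unfolding pcorr_eq_sum_dual[OF assms] of_real_sum complex_norm_square by simp
  also have "\<dots> = complex_of_real (\<Sum>t<L. (cmod (a t))\<^sup>2)"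
    unfolding pcorr_def of_real_sum complex_norm_square by simp
  finally show ?thesis
    by (simp only: of_real_eq_iff)
qed

corollary pcorr_eq_dual:
  assumes "L > 0"
  shows "pcorr L c d \<tau> = of_real (sqrt (real L)) * dual L (\<lambda>k. dual L c k * cnj (dual L d k)) \<tau>"
  unfolding pcorr_eq_sum_dual[OF assms] dual_def using assms
  by (simp add: mult.commute[of \<tau>])

(* For \<Omega> = {..<L} both sides are 0, as division by 0 yields 0. *)
lemma sum_norm_spectral_product_power2:
  assumes "\<Omega> \<subseteq> {..<L}" "spectral_constraint L \<Omega> c" "spectral_constraint L \<Omega> d"
  shows "(\<Sum>k<L. (cmod (dual L c k * cnj (dual L d k)))\<^sup>2) = (real L)\<^sup>2 / (real L - real (card \<Omega>))"
proof -
  define D where "D = real L - real (card \<Omega>)"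
  have "finite \<Omega>"
    using assms(1) finite_subset by blast
  then have D: "D = real (card ({..<L} - \<Omega>))"
    unfolding D_def using assms(1) card_mono[OF _ assms(1)]
    by (simp add: card_Diff_subset of_nat_diff)
  have "(cmod (dual L c k * cnj (dual L d k)))\<^sup>2 = (if k \<in> \<Omega> then 0 else (real L / D)\<^sup>2)"
    if "k < L" for k
  proof (cases "k \<in> \<Omega>")
    case True
    then show ?thesis
      using assms(2) that unfolding spectral_constraint_def by simp
  next
    case False
    then have c: "(cmod (dual L c k))\<^sup>2 = real L / D" and d: "(cmod (dual L d k))\<^sup>2 = real L / D"
      using assms(2,3) that unfolding spectral_constraint_def D_def by auto
    have "(cmod (dual L c k * cnj (dual L d k)))\<^sup>2 = (cmod (dual L c k))\<^sup>2 * (cmod (dual L d k))\<^sup>2"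
      by (simp add: norm_mult power_mult_distrib)
    also have "\<dots> = (real L / D)\<^sup>2"
      unfolding c d by (simp add: power2_eq_square)
    finally show ?thesis
      using False by simp
  qed
  then have "(\<Sum>k<L. (cmod (dual L c k * cnj (dual L d k)))\<^sup>2) = D * (real L / D)\<^sup>2"
    unfolding D by (simp add: sum.If_cases Diff_eq)
  also have "\<dots> = (real L)\<^sup>2 / D"
    by (cases "D = 0") (simp_all add: power2_eq_square)
  finally show ?thesis
    unfolding D_def .
qed

lemma sum_norm_pcorr_power2:
  assumes "L > 0" "\<Omega> \<subseteq> {..<L}" "spectral_constraint L \<Omega> c" "spectral_constraint L \<Omega> d"
  shows "(\<Sum>\<tau><L. (cmod (pcorr L c d \<tau>))\<^sup>2) = real L * (real L)\<^sup>2 / (real L - real (card \<Omega>))"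
proof -
  have "(\<Sum>\<tau><L. (cmod (pcorr L c d \<tau>))\<^sup>2)
      = real L * (\<Sum>\<tau><L. (cmod (dual L (\<lambda>k. dual L c k * cnj (dual L d k)) \<tau>))\<^sup>2)"
    unfolding pcorr_eq_dual[OF assms(1)] by (simp add: norm_mult power_mult_distrib sum_distrib_left)
  also have "\<dots> = real L * (\<Sum>k<L. (cmod (dual L c k * cnj (dual L d k)))\<^sup>2)"
    unfolding sum_norm_dual_power2[OF assms(1)] ..
  finally show ?thesis
    unfolding sum_norm_spectral_product_power2[OF assms(2-4)] by simp
qed

lemma ex_norm_pcorr_ge:
  assumes "L > 0" "\<Omega> \<subseteq> {..<L}" "spectral_constraint L \<Omega> c" "spectral_constraint L \<Omega> d"
  shows "\<exists>\<tau><L. real L / sqrt (real L - real (card \<Omega>)) \<le> cmod (pcorr L c d \<tau>)"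
proof (rule ccontr)
  define D where "D = real L - real (card \<Omega>)"
  have "D \<ge> 0"
    using card_mono[OF _ assms(2)] unfolding D_def by simp
  then have bound_sq: "(real L / sqrt D)\<^sup>2 = (real L)\<^sup>2 / D"
    by (simp add: power_divide)
  assume "\<not> ?thesis"
  then have "cmod (pcorr L c d \<tau>) < real L / sqrt D" if "\<tau> < L" for \<tau>
    using that unfolding D_def by auto
  then have "(cmod (pcorr L c d \<tau>))\<^sup>2 < (real L)\<^sup>2 / D" if "\<tau> < L" for \<tau>
    unfolding bound_sq[symmetric] using that by (simp add: power_strict_mono)
  then have "(\<Sum>\<tau><L. (cmod (pcorr L c d \<tau>))\<^sup>2) < of_nat (card {..<L}) * ((real L)\<^sup>2 / D)"
    using assms(1) by (intro sum_bounded_above_strict) auto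
  then show False
    unfolding sum_norm_pcorr_power2[OF assms] D_def by simp
qed

lemma norm_pcorr_le_theta_c:
  assumes "i < K" "j < K" "i \<noteq> j" "l < M" "m < M" "\<tau> < L"
  shows "cmod (pcorr L (C i l) (C j m) \<tau>) \<le> theta_c L K M C"
proof -
  let ?f = "\<lambda>(i, j, l, m, \<tau>). cmod (pcorr L (C i l) (C j m) \<tau>)"
  have "{cmod (pcorr L (C i l) (C j m) \<tau>) | i j l m \<tau>.
         i < K \<and> j < K \<and> i \<noteq> j \<and> l < M \<and> m < M \<and> \<tau> < L}
        \<subseteq> ?f ` ({..<K} \<times> {..<K} \<times> {..<M} \<times> {..<M} \<times> {..<L})"
  proof
    fix x
    assume "x \<in> {cmod (pcorr L (C i l) (C j m) \<tau>) | i j l m \<tau>.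
         i < K \<and> j < K \<and> i \<noteq> j \<and> l < M \<and> m < M \<and> \<tau> < L}"
    then obtain i j l m \<tau> where "x = cmod (pcorr L (C i l) (C j m) \<tau>)"
      and "i < K" "j < K" "l < M" "m < M" "\<tau> < L"
      by blast
    then show "x \<in> ?f ` ({..<K} \<times> {..<K} \<times> {..<M} \<times> {..<M} \<times> {..<L})"
      by (intro image_eqI[of _ _ "(i, j, l, m, \<tau>)"]) auto
  qed
  then have "finite {cmod (pcorr L (C i l) (C j m) \<tau>) | i j l m \<tau>.
         i < K \<and> j < K \<and> i \<noteq> j \<and> l < M \<and> m < M \<and> \<tau> < L}"
    by (rule finite_subset) simp
  then show ?thesis
    unfolding theta_c_def by (rule Max_ge) (use assms in blast)
qed

theorem theorem2:
  fixes L K M n :: nat and \<Omega> :: "nat set" and C :: "nat \<Rightarrow> nat \<Rightarrow> nat \<Rightarrow> complex"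
  assumes "L \<ge> 2"
    and "\<Omega> \<subset> {..<L}"
    and "card \<Omega> = n"
    and "K \<ge> 2"
    and "M \<ge> 1"
    and "\<And>i l. i < K \<Longrightarrow> l < M \<Longrightarrow> spectral_constraint L \<Omega> (C i l)"
  shows "theta_c L K M C \<ge> real L / sqrt (real L - real n)"
proof -
  have "L > 0" and "\<Omega> \<subseteq> {..<L}"
    using assms(1,2) by auto
  moreover have "spectral_constraint L \<Omega> (C 0 0)" and "spectral_constraint L \<Omega> (C 1 0)"
    using assms(4-6) by auto
  ultimately have "\<exists>\<tau><L. real L / sqrt (real L - real n) \<le> cmod (pcorr L (C 0 0) (C 1 0) \<tau>)"
    unfolding assms(3)[symmetric] by (rule ex_norm_pcorr_ge)
  then obtain \<tau> where "\<tau> < L"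
    and "real L / sqrt (real L - real n) \<le> cmod (pcorr L (C 0 0) (C 1 0) \<tau>)"
    by blast
  moreover have "cmod (pcorr L (C 0 0) (C 1 0) \<tau>) \<le> theta_c L K M C"
    using \<open>\<tau> < L\<close> assms(4,5) by (intro norm_pcorr_le_theta_c) auto
  ultimately show ?thesis
    by linarith
qed

end
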